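(* Fix any $\alpha\ge1$ and any constant success probability $p\in(0,1]$. Consider any (possibly randomized) algorithm in the ordinal query model for facility location with uniform opening cost. Suppose that, on every instance and every consistent profile, it outputs with probability at least $p$ a nonempty set $F\subseteq X$ whose facility-location cost is less than $\alpha$ times the optimum. Then it must make $\Omega(n/\alpha)$ distance queries on some $n$-point instance.
   Context: Ordinal query model: $(X,d)$ is a finite metric space with $|X|=n$. Every point $x\in X$ reports a ranking $\pi_x$ of all points of $X$ such that $y$ is ranked above $y'$ only if $d(x,y)\le d(x,y')$ (ties broken arbitrarily); the collection is a profile consistent with $d$. An algorithm receives $X$, the profile, and the opening cost $f>0$ for free. Its only other access to $d$ is by querying the exact value $d(x,y)$ for pairs of its choice; each such value costs one query. Facility location with uniform opening cost $f$: the cost of a nonempty $F\subseteq X$ is $\sum_{x\in X}\min_{c\in F}d(x,c)+f\cdot|F|$, and the optimum is the minimum of this cost over nonempty $F\subseteq X$. *)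

theory Defs
  imports "HOL-Probability.Probability"
begin

text \<open>Points of an n-point space are 0..<n. A metric on it is d :: nat => nat => real
  (values outside the range are fixed to 0, they carry no information).\<close>

definition is_metric :: "nat \<Rightarrow> (nat \<Rightarrow> nat \<Rightarrow> real) \<Rightarrow> bool" where
  "is_metric n d \<longleftrightarrow>
     (\<forall>x<n. d x x = 0) \<and>
     (\<forall>x<n. \<forall>y<n. x \<noteq> y \<longrightarrow> d x y > 0) \<and>
     (\<forall>x<n. \<forall>y<n. d x y = d y x) \<and>
     (\<forall>x<n. \<forall>y<n. \<forall>z<n. d x z \<le> d x y + d y z) \<and>
     (\<forall>x y. n \<le> x \<or> n \<le> y \<longrightarrow> d x y = 0)"

definition consistent_profile :: "nat \<Rightarrow> (nat \<Rightarrow> nat \<Rightarrow> real) \<Rightarrow> (nat \<Rightarrow> nat list) \<Rightarrow> bool" where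
  "consistent_profile n d \<pi> \<longleftrightarrow>
     (\<forall>x<n. distinct (\<pi> x) \<and> set (\<pi> x) = {0..<n} \<and>
        (\<forall>i j. i < j \<and> j < n \<longrightarrow> d x (\<pi> x ! i) \<le> d x (\<pi> x ! j)))"

definition fl_instance :: "nat \<Rightarrow> (nat \<Rightarrow> nat \<Rightarrow> real) \<Rightarrow> (nat \<Rightarrow> nat list) \<Rightarrow> real \<Rightarrow> bool" where
  "fl_instance n d \<pi> f \<longleftrightarrow> is_metric n d \<and> consistent_profile n d \<pi> \<and> f > 0"

definition fl_cost :: "nat \<Rightarrow> (nat \<Rightarrow> nat \<Rightarrow> real) \<Rightarrow> real \<Rightarrow> nat set \<Rightarrow> real" where
  "fl_cost n d f F = (\<Sum>x<n. Min ((\<lambda>c. d x c) ` F)) + f * real (card F)"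

definition fl_opt :: "nat \<Rightarrow> (nat \<Rightarrow> nat \<Rightarrow> real) \<Rightarrow> real \<Rightarrow> real" where
  "fl_opt n d f = Min {fl_cost n d f F | F. F \<noteq> {} \<and> F \<subseteq> {0..<n}}"

text \<open>Deterministic adaptive query algorithms (decision trees): either output a set,
  or query the exact distance d x y and continue depending on the answer.\<close>

datatype qalg = Output "nat set" | Query nat nat "real \<Rightarrow> qalg"

primrec run_output :: "qalg \<Rightarrow> (nat \<Rightarrow> nat \<Rightarrow> real) \<Rightarrow> nat set" where
  "run_output (Output F) d = F"
| "run_output (Query x y k) d = run_output (k (d x y)) d"

primrec num_queries :: "qalg \<Rightarrow> (nat \<Rightarrow> nat \<Rightarrow> real) \<Rightarrow> nat" where
  "num_queries (Output F) d = 0"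
| "num_queries (Query x y k) d = Suc (num_queries (k (d x y)) d)"

text \<open>A randomized algorithm: a seed \<omega> drawn from a probability space M; given the
  (free) input n, profile, opening cost f and the seed it is a deterministic decision tree.\<close>

definition approx_succeeds ::
  "'r measure \<Rightarrow> (nat \<Rightarrow> (nat \<Rightarrow> nat list) \<Rightarrow> real \<Rightarrow> 'r \<Rightarrow> qalg) \<Rightarrow> nat \<Rightarrow> real \<Rightarrow> real \<Rightarrow> bool" where
  "approx_succeeds M A n \<alpha> p \<longleftrightarrow>
     (\<forall>d \<pi> f. fl_instance n d \<pi> f \<longrightarrow>
        (\<exists>E\<in>sets M. measure M E \<ge> p \<and>
           (\<forall>\<omega>\<in>E. let F = run_output (A n \<pi> f \<omega>) d in
               F \<noteq> {} \<and> F \<subseteq> {0..<n} \<and> fl_cost n d f F < \<alpha> * fl_opt n d f)))"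

end

theory Submission
  imports Defs
begin

text \<open>Split the n points into blocks of k \<approx> 2\<alpha>/p consecutive points; points of one block are
  at distance 1/n, points of different blocks at distance D = \<alpha>(n/k + k + 2). Declaring one block g
  "far" (its points pairwise at distance D as well) changes no ranking and keeps OPT \<le> D/\<alpha>,
  so an output beating \<alpha>\<cdot>OPT on that instance opens all k points of block g but fewer than D
  facilities. Run on the instance without a far block, the algorithm sees instance g only through
  queries at points of block g. So a run with fewer than Q queries succeeds for at most Q + D/k of
  the n/k far-block instances simultaneously; averaging over the seed gives (n/k)p \<le> Q + D/k,
  which fails for Q = p^2 n / (12\<alpha>) once n is large.\<close>

lemma is_metric_nonneg: "is_metric n d \<Longrightarrow> 0 \<le> d x y"
  unfolding is_metric_def by (metis less_eq_real_def linorder_not_le)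

lemma fl_cost_ge_opening_cost:
  assumes "is_metric n d" "finite F" "F \<noteq> {}"
  shows "f * real (card F) \<le> fl_cost n d f F"
  using assms is_metric_nonneg[OF assms(1)] unfolding fl_cost_def
  by (simp add: sum_nonneg)

lemma fl_cost_ge_connection_cost:
  assumes "is_metric n d" "finite F" "F \<noteq> {}" "0 \<le> f" "x < n" "\<And>c. c \<in> F \<Longrightarrow> r \<le> d x c"
  shows "r \<le> fl_cost n d f F"
proof -
  have "r \<le> Min ((\<lambda>c. d x c) ` F)"
    using assms by simp
  also have "\<dots> \<le> (\<Sum>y<n. Min ((\<lambda>c. d y c) ` F))"
    using assms is_metric_nonneg[OF assms(1)] by (intro member_le_sum) auto
  finally show ?thesis
    using assms(4) unfolding fl_cost_def by (simp add: add_increasing2)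
qed

lemma fl_opt_le_fl_cost: "F \<noteq> {} \<Longrightarrow> F \<subseteq> {0..<n} \<Longrightarrow> fl_opt n d f \<le> fl_cost n d f F"
  unfolding fl_opt_def by (rule Min_le) (auto simp: setcompr_eq_image)

primrec queries :: "qalg \<Rightarrow> (nat \<Rightarrow> nat \<Rightarrow> real) \<Rightarrow> (nat \<times> nat) list" where
  "queries (Output F) d = []"
| "queries (Query x y k) d = (x, y) # queries (k (d x y)) d"

lemma length_queries: "length (queries T d) = num_queries T d"
  by (induction T) auto

lemma run_output_cong_queries:
  "(\<And>x y. (x, y) \<in> set (queries T d) \<Longrightarrow> d' x y = d x y) \<Longrightarrow> run_output T d' = run_output T d"
  by (induction T) auto

lemma (in prob_space) sum_prob_le_if_AE_card_le:
  assumes "finite I" "\<And>i. i \<in> I \<Longrightarrow> E i \<in> events"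
    and "AE \<omega> in M. real (card {i\<in>I. \<omega> \<in> E i}) \<le> B"
  shows "(\<Sum>i\<in>I. prob (E i)) \<le> B"
proof -
  have integrable: "integrable M (indicator (E i) :: 'a \<Rightarrow> real)" if "i \<in> I" for i
    using assms(2)[OF that] by (auto intro!: integrable_real_indicator simp: emeasure_eq_measure)
  have card_eq: "real (card {i\<in>I. \<omega> \<in> E i}) = (\<Sum>i\<in>I. indicator (E i) \<omega>)" for \<omega>
    using assms(1) sum_indicator_eq_card[of I "{i. \<omega> \<in> E i}"] by (simp add: indicator_def Int_def)
  have "(\<Sum>i\<in>I. prob (E i)) = expectation (\<lambda>\<omega>. \<Sum>i\<in>I. indicator (E i) \<omega>)"
    using assms(2) integrable by (subst Bochner_Integration.integral_sum) auto
  also have "\<dots> \<le> expectation (\<lambda>_. B)"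
    using assms(3) integrable by (intro integral_mono_AE) (auto simp: card_eq)
  finally show ?thesis by (simp add: prob_space)
qed

definition block :: "nat \<Rightarrow> nat \<Rightarrow> nat set" where
  "block k g = {x. x div k = g}"

lemma block_eq_atLeastLessThan: "0 < k \<Longrightarrow> block k g = {g * k..<g * k + k}"
  unfolding block_def
  by (auto simp: div_nat_eqI dividend_less_div_times div_times_less_eq_dividend mult.commute)
     (metis add_less_cancel_left mod_less_divisor mult_div_mod_eq)

lemma finite_block: "0 < k \<Longrightarrow> finite (block k g)"
  by (simp add: block_eq_atLeastLessThan)

lemma card_block: "0 < k \<Longrightarrow> card (block k g) = k"
  by (simp add: block_eq_atLeastLessThan)

lemma block_subset_points:
  assumes "g < n div k"
  shows "block k g \<subseteq> {0..<n}"
proof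
  fix x assume "x \<in> block k g"
  then have "x div k < n div k" using assms by (simp add: block_def)
  then show "x \<in> {0..<n}" by (metis atLeastLessThan_iff div_le_mono not_less zero_le)
qed

lemma card_mult_le_card_if_blocks_subset:
  assumes "0 < k" "finite F" "\<And>g. g \<in> C \<Longrightarrow> block k g \<subseteq> F"
  shows "card C * k \<le> card F"
proof (cases "finite C")
  case True
  have "card C * k = (\<Sum>g\<in>C. card (block k g))"
    using assms(1) by (simp add: card_block)
  also have "\<dots> = card (\<Union>g\<in>C. block k g)"
    using True assms(1) by (intro card_UN_disjoint[symmetric]) (auto simp: finite_block, auto simp: block_def)
  also have "\<dots> \<le> card F"
    using assms by (intro card_mono) auto
  finally show ?thesis .
qed simp

lemma card_le_card_add_covered_blocks:
  assumes "0 < k" "0 \<le> D" "finite S" "finite Q"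
    and "\<And>g. g \<in> S - Q \<Longrightarrow> block k g \<subseteq> F \<and> finite F \<and> real (card F) < D"
  shows "real (card S) \<le> real (card Q) + D / real k"
proof -
  have "card S \<le> card Q + card (S - Q)"
    using assms(3,4) by (rule_tac order_trans[OF card_mono card_Un_le]) auto
  moreover have "real (card (S - Q)) \<le> D / real k"
  proof (cases "S - Q = {}")
    case False
    then obtain g where "g \<in> S - Q" by blast
    with assms(5) have F: "finite F" "real (card F) < D" by auto
    then have "card (S - Q) * k \<le> card F"
      using assms(1,5) by (intro card_mult_le_card_if_blocks_subset) auto
    with F(2) have "real (card (S - Q)) * real k < D"
      by (metis of_nat_le_iff of_nat_mult order_le_less_trans)
    then show ?thesis using assms(1) by (simp add: field_simps)
  next
    case True
    then have "card (S - Q) = 0" by (simp only: card.empty)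
    then show ?thesis using assms(1,2) by simp
  qed
  ultimately show ?thesis by linarith
qed

lemma card_multiples_less_le: "card {x. x < n \<and> x mod k = 0} \<le> n div k + 1"
proof -
  have sub: "{x. x < n \<and> x mod k = 0} \<subseteq> (\<lambda>j. j * k) ` {..n div k}"
  proof
    fix x assume "x \<in> {x. x < n \<and> x mod k = 0}"
    then have "x = x div k * k" "x div k \<in> {..n div k}"
      by (auto simp: div_le_mono)
    then show "x \<in> (\<lambda>j. j * k) ` {..n div k}" by blast
  qed
  then show ?thesis
    using card_mono[OF _ sub] card_image_le[of "{..n div k}" "\<lambda>j. j * k"] by fastforce
qed

(* Block g is the far one; g = n is no block index of a point,
   so it gives the instance without a far block. *)
definition block_metric :: "nat \<Rightarrow> nat \<Rightarrow> nat \<Rightarrow> real \<Rightarrow> real \<Rightarrow> nat \<Rightarrow> nat \<Rightarrow> real" where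
  "block_metric n k g \<delta> D x y =
     (if x < n \<and> y < n \<and> x \<noteq> y then if x div k = y div k \<and> x div k \<noteq> g then \<delta> else D else 0)"

definition block_rank :: "nat \<Rightarrow> nat \<Rightarrow> nat \<Rightarrow> nat" where
  "block_rank k x y = (if y = x then 0 else if y div k = x div k then 1 else 2)"

definition block_profile :: "nat \<Rightarrow> nat \<Rightarrow> nat \<Rightarrow> nat list" where
  "block_profile n k x = sort_key (block_rank k x) [0..<n]"

lemma is_metric_block_metric: "0 < \<delta> \<Longrightarrow> \<delta> \<le> D \<Longrightarrow> is_metric n (block_metric n k g \<delta> D)"
  unfolding is_metric_def block_metric_def by auto

lemma block_metric_mono_rank:
  assumes "0 \<le> \<delta>" "\<delta> \<le> D" "block_rank k x y \<le> block_rank k x y'" "x < n" "y < n" "y' < n"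
  shows "block_metric n k g \<delta> D x y \<le> block_metric n k g \<delta> D x y'"
  using assms unfolding block_metric_def block_rank_def by (auto split: if_splits)

lemma consistent_profile_block_profile:
  assumes "0 \<le> \<delta>" "\<delta> \<le> D"
  shows "consistent_profile n (block_metric n k g \<delta> D) (block_profile n k)"
  unfolding consistent_profile_def
proof (intro allI impI conjI)
  fix x assume "x < n"
  show "distinct (block_profile n k x)" "set (block_profile n k x) = {0..<n}"
    by (simp_all add: block_profile_def)
  fix i j assume ij: "i < j \<and> j < n"
  have "length (block_profile n k x) = n" "sorted (map (block_rank k x) (block_profile n k x))"
    by (simp_all add: block_profile_def)
  with ij have "block_rank k x (block_profile n k x ! i) \<le> block_rank k x (block_profile n k x ! j)"
    "block_profile n k x ! i < n" "block_profile n k x ! j < n"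
    using sorted_nth_mono nth_mem \<open>set (block_profile n k x) = {0..<n}\<close> by fastforce+
  with assms \<open>x < n\<close> show "block_metric n k g \<delta> D x (block_profile n k x ! i)
      \<le> block_metric n k g \<delta> D x (block_profile n k x ! j)"
    by (intro block_metric_mono_rank) auto
qed

lemma fl_instance_block_metric:
  "0 < \<delta> \<Longrightarrow> \<delta> \<le> D \<Longrightarrow> fl_instance n (block_metric n k g \<delta> D) (block_profile n k) 1"
  by (simp add: fl_instance_def is_metric_block_metric consistent_profile_block_profile)

lemma block_metric_eq_if_not_far:
  "x div k \<noteq> g \<Longrightarrow> block_metric n k g \<delta> D x y = block_metric n k n \<delta> D x y"
  using div_le_dividend[of x k] unfolding block_metric_def by (auto simp del: div_le_dividend)

lemma fl_opt_block_metric_le: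
  assumes "g < n div k" "0 \<le> \<delta>" "\<delta> \<le> D"
  shows "fl_opt n (block_metric n k g \<delta> D) 1 \<le> real n * \<delta> + real (n div k + 1 + k)"
proof -
  have k: "0 < k" using assms(1) by (cases "k = 0") auto
  define F where "F = {x. x < n \<and> x mod k = 0} \<union> block k g"
  have F: "F \<noteq> {}" "F \<subseteq> {0..<n}"
    using block_subset_points[OF assms(1)] k by (auto simp: F_def block_eq_atLeastLessThan)
  have "card F \<le> n div k + 1 + k"
    unfolding F_def using card_multiples_less_le[of n k] card_block[OF k, of g]
      card_Un_le[of "{x. x < n \<and> x mod k = 0}" "block k g"] by linarith
  then have "real (card F) \<le> real (n div k + 1 + k)"
    by (rule of_nat_mono)
  moreover have "Min ((\<lambda>c. block_metric n k g \<delta> D x c) ` F) \<le> \<delta>" if "x < n" for x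
  proof -
    define r where "r = (if x \<in> block k g then x else x - x mod k)"
    have "r = x \<and> x \<in> block k g \<or> r div k = x div k \<and> r mod k = 0 \<and> r \<le> x \<and> x \<notin> block k g"
      by (auto simp: r_def minus_mod_eq_mult_div)
    then have "r \<in> F" "block_metric n k g \<delta> D x r \<le> \<delta>"
      using that assms(2,3) by (auto simp: F_def block_metric_def block_def)
    then show ?thesis
      using F by (meson Min_le finite_imageI finite_subset finite_atLeastLessThan image_eqI order_trans)
  qed
  then have "(\<Sum>x<n. Min ((\<lambda>c. block_metric n k g \<delta> D x c) ` F)) \<le> real n * \<delta>"
    using sum_mono[of "{..<n}" _ "\<lambda>_. \<delta>"] by fastforce
  ultimately show ?thesis
    using fl_opt_le_fl_cost[OF F, of "block_metric n k g \<delta> D" 1] unfolding fl_cost_def by linarith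
qed

lemma far_block_subset_if_fl_cost_less:
  assumes "fl_cost n (block_metric n k g \<delta> D) 1 F < D" "F \<noteq> {}" "F \<subseteq> {0..<n}"
    and "g < n div k" "0 < \<delta>" "\<delta> \<le> D"
  shows "block k g \<subseteq> F"
proof
  fix x assume x: "x \<in> block k g"
  show "x \<in> F"
  proof (rule ccontr)
    assume "x \<notin> F"
    then have "\<And>c. c \<in> F \<Longrightarrow> D \<le> block_metric n k g \<delta> D x c"
      using x assms(3) block_subset_points[OF assms(4)] by (auto simp: block_metric_def block_def)
    then have "D \<le> fl_cost n (block_metric n k g \<delta> D) 1 F"
      using x assms block_subset_points[OF assms(4)]
      by (intro fl_cost_ge_connection_cost[where x = x] is_metric_block_metric) (auto intro: finite_subset)
    with assms(1) show False by linarith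
  qed
qed

lemma approx_output_covers_unqueried_far_block:
  fixes T :: qalg and n k g :: nat and \<delta> D \<alpha> :: real
  defines "d j \<equiv> block_metric n k j \<delta> D"
  assumes "g < n div k" "0 < \<delta>" "\<delta> \<le> D" "0 \<le> \<alpha>"
    and "\<alpha> * (real n * \<delta> + real (n div k + 1 + k)) \<le> D"
    and "g \<notin> (\<lambda>(x, y). x div k) ` set (queries T (d n))"
    and "let F = run_output T (d g) in
           F \<noteq> {} \<and> F \<subseteq> {0..<n} \<and> fl_cost n (d g) 1 F < \<alpha> * fl_opt n (d g) 1"
  shows "block k g \<subseteq> run_output T (d n) \<and> run_output T (d n) \<subseteq> {0..<n}
           \<and> real (card (run_output T (d n))) < D"
proof -
  have "run_output T (d g) = run_output T (d n)"
    using assms(7) unfolding d_def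
    by (intro run_output_cong_queries block_metric_eq_if_not_far) force
  with assms(8) have out: "run_output T (d n) \<noteq> {}" "run_output T (d n) \<subseteq> {0..<n}"
      "fl_cost n (d g) 1 (run_output T (d n)) < \<alpha> * fl_opt n (d g) 1"
    by (simp_all add: Let_def)
  have "\<alpha> * fl_opt n (d g) 1 \<le> D"
    using fl_opt_block_metric_le[of g n k \<delta> D] assms(2-6) unfolding d_def
    by (meson mult_left_mono order_trans less_imp_le)
  with out have cost: "fl_cost n (d g) 1 (run_output T (d n)) < D" by linarith
  have "real (card (run_output T (d n))) \<le> fl_cost n (d g) 1 (run_output T (d n))"
    using fl_cost_ge_opening_cost[of n "d g" "run_output T (d n)" 1] is_metric_block_metric[OF assms(3,4)] out(1,2)
    unfolding d_def by (simp add: finite_subset)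
  moreover have "block k g \<subseteq> run_output T (d n)"
    using far_block_subset_if_fl_cost_less[of n k g \<delta> D] cost out(1,2) assms(2-4)
    unfolding d_def by simp
  ultimately show ?thesis using cost out(2) by simp
qed

lemma approx_succeeds_block_instances_bound:
  fixes M :: "'r measure" and \<alpha> p Q :: real and n k :: nat
  defines "D \<equiv> \<alpha> * real (n div k + k + 2)"
  assumes "prob_space M" "approx_succeeds M A n \<alpha> p" "0 < k" "0 < n" "1 \<le> \<alpha>"
    and "AE \<omega> in M. real (num_queries (A n (block_profile n k) 1 \<omega>)
                                        (block_metric n k n (1 / real n) D)) < Q"
  shows "real (n div k) * p \<le> Q + D / real k"
proof -
  interpret prob_space M by fact
  define m \<delta> where "m = n div k" and "\<delta> = 1 / real n"
  define d where "d g = block_metric n k g \<delta> D" for g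
  define T where "T \<omega> = A n (block_profile n k) 1 \<omega>" for \<omega>
  define queried where "queried \<omega> = (\<lambda>(x, y). x div k) ` set (queries (T \<omega>) (d n))" for \<omega>
  define out where "out \<omega> = run_output (T \<omega>) (d n)" for \<omega>
  have \<delta>: "0 < \<delta>" "\<delta> \<le> D" "real n * \<delta> = 1"
    using assms(5,6) by (auto simp: \<delta>_def D_def intro: order_trans[OF _ mult_mono, of _ 1 1])
  have "\<forall>g<m. \<exists>E\<in>events. p \<le> prob E \<and> (\<forall>\<omega>\<in>E. let F = run_output (T \<omega>) (d g) in
          F \<noteq> {} \<and> F \<subseteq> {0..<n} \<and> fl_cost n (d g) 1 F < \<alpha> * fl_opt n (d g) 1)"
    using assms(3) fl_instance_block_metric[OF \<delta>(1,2)] unfolding approx_succeeds_def d_def T_def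
    by blast
  then obtain E where E: "\<And>g. g < m \<Longrightarrow> E g \<in> events \<and> p \<le> prob (E g) \<and>
      (\<forall>\<omega>\<in>E g. let F = run_output (T \<omega>) (d g) in
          F \<noteq> {} \<and> F \<subseteq> {0..<n} \<and> fl_cost n (d g) 1 F < \<alpha> * fl_opt n (d g) 1)"
    by metis
  have hits: "real (card {g\<in>{..<m}. \<omega> \<in> E g}) \<le> Q + D / real k"
    if few: "real (num_queries (T \<omega>) (d n)) < Q" for \<omega>
  proof -
    have "card (queried \<omega>) \<le> num_queries (T \<omega>) (d n)"
      unfolding queried_def length_queries[symmetric]
      by (intro card_image_le[THEN order_trans] card_length) simp
    moreover have "real (card {g\<in>{..<m}. \<omega> \<in> E g}) \<le> real (card (queried \<omega>)) + D / real k"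
    proof (rule card_le_card_add_covered_blocks)
      fix g assume g: "g \<in> {g\<in>{..<m}. \<omega> \<in> E g} - queried \<omega>"
      have "\<alpha> * (real n * \<delta> + real (n div k + 1 + k)) \<le> D"
        unfolding D_def \<delta>(3) by (simp add: algebra_simps)
      with g E[of g] assms(6) \<delta> show "block k g \<subseteq> out \<omega> \<and> finite (out \<omega>) \<and> real (card (out \<omega>)) < D"
        using approx_output_covers_unqueried_far_block[of g n k \<delta> D \<alpha> "T \<omega>"]
        unfolding queried_def out_def d_def m_def by (auto intro: finite_subset)
    qed (use assms(4) \<delta> in \<open>auto simp: queried_def\<close>)
    ultimately show ?thesis using few by linarith
  qed
  have "real m * p \<le> (\<Sum>g<m. prob (E g))"
    using sum_mono[of "{..<m}" "\<lambda>_. p" "\<lambda>g. prob (E g)"] E by auto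
  also have "\<dots> \<le> Q + D / real k"
    using E assms(7) hits unfolding T_def d_def \<delta>_def
    by (intro sum_prob_le_if_AE_card_le) (auto elim: AE_mp)
  finally show ?thesis unfolding m_def .
qed

lemma block_count_exceeds_bound:
  fixes p \<alpha> :: real and n :: nat
  defines "k \<equiv> nat \<lceil>2 * \<alpha> / p\<rceil>"
  assumes p: "0 < p" "p \<le> 1" and \<alpha>: "1 \<le> \<alpha>" and n: "12 * \<alpha> * (\<alpha> + 2) / p^2 < real n"
  shows "p^2 / 12 * real n / \<alpha> + \<alpha> * real (n div k + k + 2) / real k < real (n div k) * p"
proof -
  define m K where "m = real (n div k)" and "K = real k"
  have "1 \<le> \<alpha> / p" using p \<alpha> by (simp add: field_simps)
  then have K: "2 * \<alpha> / p \<le> K" "K \<le> 3 * \<alpha> / p" "0 < K"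
    unfolding K_def k_def by linarith+
  then have "0 < k" by (simp add: K_def)
  then have "n < (n div k + 1) * k"
    by (metis add.commute dividend_less_div_times mult.commute mult_Suc plus_1_eq_Suc)
  then have "real n < (m + 1) * K"
    unfolding m_def K_def by (metis of_nat_1 of_nat_add of_nat_less_iff of_nat_mult)
  then have m: "real n / K - 1 \<le> m" using K(3) by (simp add: field_simps)
  have "\<alpha> / K \<le> p / 2" using K p by (simp add: field_simps)
  then have h1: "\<alpha> * m / K \<le> m * p / 2"
    using mult_left_mono[of "\<alpha> / K" "p / 2" m] unfolding m_def by (simp add: mult.commute)
  have "2 * \<alpha> / K \<le> p" using K p by (simp add: field_simps)
  moreover have "\<alpha> * (K + 2) / K = \<alpha> + 2 * \<alpha> / K" using K(3) by (simp add: field_simps)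
  ultimately have h2: "\<alpha> * (K + 2) / K \<le> \<alpha> + 1" using p by linarith
  have "real n / (3 * \<alpha> / p) \<le> real n / K"
    using K p \<alpha> by (intro divide_left_mono) auto
  then have "real n * p / (3 * \<alpha>) \<le> real n / K"
    using p \<alpha> by (simp add: field_simps)
  then have "(real n * p / (3 * \<alpha>) - 1) * p / 2 \<le> m * p / 2"
    using m p by (intro divide_right_mono mult_right_mono) auto
  then have h3: "p^2 * real n / (6 * \<alpha>) - p / 2 \<le> m * p / 2"
    using \<alpha> by (simp add: field_simps power2_eq_square)
  have h4: "\<alpha> + 2 < p^2 * real n / (12 * \<alpha>)"
    using n p \<alpha> by (simp add: field_simps)
  have "\<alpha> * real (n div k + k + 2) / real k = \<alpha> * m / K + \<alpha> * (K + 2) / K"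
    unfolding m_def K_def by (simp add: add_divide_distrib[symmetric] algebra_simps)
  moreover have "p^2 / 12 * real n / \<alpha> = p^2 * real n / (12 * \<alpha>)"
    "p^2 * real n / (6 * \<alpha>) = 2 * (p^2 * real n / (12 * \<alpha>))"
    by simp_all
  ultimately show ?thesis
    using h1 h2 h3 h4 p unfolding m_def by linarith
qed

theorem mainTheorem13:
  fixes p :: real
  assumes "0 < p" and "p \<le> 1"
  shows "\<exists>c>0. \<forall>\<alpha>::real. \<alpha> \<ge> 1 \<longrightarrow> (\<exists>N::nat. \<forall>n\<ge>N.
           \<forall>(M::'r measure) (A :: nat \<Rightarrow> (nat \<Rightarrow> nat list) \<Rightarrow> real \<Rightarrow> 'r \<Rightarrow> qalg).
             prob_space M \<and> approx_succeeds M A n \<alpha> p \<longrightarrow>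
             (\<exists>d \<pi> f. fl_instance n d \<pi> f \<and>
                \<not> (AE \<omega> in M. real (num_queries (A n \<pi> f \<omega>) d) < c * real n / \<alpha>)))"
proof (intro exI[of _ "p^2 / 12"] conjI allI impI)
  show "0 < p^2 / 12" using assms by simp
  fix \<alpha> :: real assume \<alpha>: "1 \<le> \<alpha>"
  define k where "k = nat \<lceil>2 * \<alpha> / p\<rceil>"
  define D where "D n = \<alpha> * real (n div k + k + 2)" for n
  show "\<exists>N. \<forall>n\<ge>N. \<forall>M (A :: nat \<Rightarrow> (nat \<Rightarrow> nat list) \<Rightarrow> real \<Rightarrow> 'r \<Rightarrow> qalg).
          prob_space M \<and> approx_succeeds M A n \<alpha> p \<longrightarrow> (\<exists>d \<pi> f. fl_instance n d \<pi> f \<and>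
            \<not> (AE \<omega> in M. real (num_queries (A n \<pi> f \<omega>) d) < p^2 / 12 * real n / \<alpha>))"
  proof (intro exI[of _ "nat \<lceil>12 * \<alpha> * (\<alpha> + 2) / p^2\<rceil> + 1"] allI impI)
    fix n M and A :: "nat \<Rightarrow> (nat \<Rightarrow> nat list) \<Rightarrow> real \<Rightarrow> 'r \<Rightarrow> qalg"
    assume "nat \<lceil>12 * \<alpha> * (\<alpha> + 2) / p^2\<rceil> + 1 \<le> n" and MA: "prob_space M \<and> approx_succeeds M A n \<alpha> p"
    then have n: "12 * \<alpha> * (\<alpha> + 2) / p^2 < real n" by linarith
    moreover have "0 \<le> 12 * \<alpha> * (\<alpha> + 2) / p^2" using \<alpha> by simp
    ultimately have "0 < n" by (metis of_nat_0_less_iff order_le_less_trans)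
    moreover have "0 < k" using assms \<alpha> by (simp add: k_def)
    ultimately have "\<not> (AE \<omega> in M. real (num_queries (A n (block_profile n k) 1 \<omega>)
                  (block_metric n k n (1 / real n) (D n))) < p^2 / 12 * real n / \<alpha>)"
      using approx_succeeds_block_instances_bound[of M A n \<alpha> p k] MA \<alpha>
        block_count_exceeds_bound[OF assms \<alpha> n] unfolding k_def D_def by fastforce
    moreover have "fl_instance n (block_metric n k n (1 / real n) (D n)) (block_profile n k) 1"
      using \<open>0 < n\<close> \<alpha> by (intro fl_instance_block_metric) (auto simp: D_def intro: order_trans[OF _ mult_mono, of _ 1 1])
    ultimately show "\<exists>d \<pi> f. fl_instance n d \<pi> f \<and>
        \<not> (AE \<omega> in M. real (num_queries (A n \<pi> f \<omega>) d) < p^2 / 12 * real n / \<alpha>)"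
      by blast
  qed
qed

end
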